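(* Let $v$ be a weight on $[0,1)$ satisfying $\lim_{r\to1^-}v(r)=0$. For each $t\in[0,1)$ both operators $C_t\colon H^\infty_v\to H^\infty_v$ and $C_t\colon H^0_v\to H^0_v$ are compact.
   Context: $\mathbb{D}=\{z\in\mathbb{C}:|z|<1\}$ and $H(\mathbb{D})$ is the space of holomorphic functions on $\mathbb{D}$. A weight is a continuous non-increasing function $v\colon[0,1)\to(0,\infty)$, extended to $\mathbb{D}$ by $v(z):=v(|z|)$. $H^\infty_v=\{f\in H(\mathbb{D}):\|f\|_{\infty,v}:=\sup_{z\in\mathbb{D}}|f(z)|v(z)<\infty\}$ and $H^0_v=\{f\in H(\mathbb{D}):\lim_{|z|\to1^-}|f(z)|v(z)=0\}$, both with the norm $\|\cdot\|_{\infty,v}$. For $t\in[0,1]$ the generalized Cesàro operator $C_t$ is defined on $f\in H(\mathbb{D})$ by $C_tf(0)=f(0)$ and $C_tf(z)=\frac{1}{z}\int_0^z\frac{f(\xi)}{1-t\xi}\,d\xi$ for $z\in\mathbb{D}\setminus\{0\}$. *)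

theory Defs
  imports "HOL-Complex_Analysis.Complex_Analysis"
begin

definition is_weight :: "(real \<Rightarrow> real) \<Rightarrow> bool" where
  "is_weight v \<longleftrightarrow> continuous_on {0..<1} v
     \<and> (\<forall>r s. 0 \<le> r \<and> r \<le> s \<and> s < 1 \<longrightarrow> v s \<le> v r)
     \<and> (\<forall>r. 0 \<le> r \<and> r < 1 \<longrightarrow> 0 < v r)"

definition wnorm :: "(real \<Rightarrow> real) \<Rightarrow> (complex \<Rightarrow> complex) \<Rightarrow> real" where
  "wnorm v f = (SUP z\<in>ball 0 1. norm (f z) * v (norm z))"

definition Hinf :: "(real \<Rightarrow> real) \<Rightarrow> (complex \<Rightarrow> complex) set" where
  "Hinf v = {f. f holomorphic_on ball 0 1
      \<and> bdd_above ((\<lambda>z. norm (f z) * v (norm z)) ` ball 0 1)}"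

definition H0 :: "(real \<Rightarrow> real) \<Rightarrow> (complex \<Rightarrow> complex) set" where
  "H0 v = {f. f holomorphic_on ball 0 1
      \<and> (\<forall>e>0. \<exists>r<1. \<forall>z. r < norm z \<and> norm z < 1 \<longrightarrow> norm (f z) * v (norm z) < e)}"

definition cesaro :: "real \<Rightarrow> (complex \<Rightarrow> complex) \<Rightarrow> complex \<Rightarrow> complex" where
  "cesaro t f z = (if z = 0 then f 0
     else contour_integral (linepath 0 z) (\<lambda>\<xi>. f \<xi> / (1 - of_real t * \<xi>)) / z)"

definition compact_op_on :: "(real \<Rightarrow> real) \<Rightarrow> (complex \<Rightarrow> complex) set
    \<Rightarrow> ((complex \<Rightarrow> complex) \<Rightarrow> (complex \<Rightarrow> complex)) \<Rightarrow> bool" where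
  "compact_op_on v X T \<longleftrightarrow> (\<forall>f\<in>X. T f \<in> X) \<and>
     (\<forall>F. (\<forall>n. F n \<in> X \<and> wnorm v (F n) \<le> 1) \<longrightarrow>
        (\<exists>(r::nat \<Rightarrow> nat) g. strict_mono r \<and> g \<in> X \<and>
           (\<lambda>n. wnorm v (\<lambda>z. T (F (r n)) z - g z)) \<longlonglongrightarrow> 0))"

end

(* Write G for a primitive of f(xi)/(1 - t xi) on the disc, so that C_t f(z) = (G(z) - G(0))/z.
   If |f| v <= M, then |f(xi)/(1 - t xi)| <= K/v(r) on |xi| <= r, where K = M/(1-t). Estimating
   G along the radius through z, first up to modulus 1-delta and then on to z, gives
   |C_t f(z)| v(|z|) <= 2K (v(|z|)/v(1-delta) + delta) whenever |z| > 1-delta >= 1/2. Since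
   v(r) -> 0 as r -> 1, the image of the unit ball of H^inf_v under C_t is therefore uniformly
   small near the boundary; in particular C_t maps H^inf_v into H^0_v. The image is also locally
   bounded, so by Montel's theorem every sequence in it has a locally uniformly convergent
   subsequence, and uniform smallness near the boundary upgrades this to convergence in the
   weighted norm. *)

theory Submission
  imports Defs
begin

lemma weight_antimono: "is_weight v \<Longrightarrow> 0 \<le> r \<Longrightarrow> r \<le> s \<Longrightarrow> s < 1 \<Longrightarrow> v s \<le> v r"
  unfolding is_weight_def by blast

lemma weight_pos: "is_weight v \<Longrightarrow> 0 \<le> r \<Longrightarrow> r < 1 \<Longrightarrow> 0 < v r"
  unfolding is_weight_def by blast

lemma norm_le_of_weighted_bound:
  assumes "is_weight v" "norm w * v (norm z) \<le> M" "norm z \<le> R" "R < 1"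
  shows "norm w \<le> M / v R"
proof -
  have "0 < v R" "v R \<le> v (norm z)"
    using assms weight_pos weight_antimono by (auto intro: order_trans[OF norm_ge_zero])
  then have "norm w * v R \<le> M"
    using assms(2) by (meson mult_left_mono norm_ge_zero order_trans)
  then show ?thesis
    using \<open>0 < v R\<close> by (simp add: pos_le_divide_eq)
qed

lemma norm_one_minus_of_real_mult_ge:
  fixes \<xi> :: complex
  assumes "norm \<xi> \<le> 1"
  shows "1 - \<bar>t\<bar> \<le> norm (1 - of_real t * \<xi>)"
proof -
  have "norm (of_real t * \<xi>) \<le> \<bar>t\<bar>"
    using assms by (simp add: norm_mult mult_left_le)
  then show ?thesis
    using norm_triangle_ineq2[of 1 "of_real t * \<xi>"] by simp
qed

lemma one_minus_of_real_mult_nonzero: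
  fixes \<xi> :: complex
  assumes "norm \<xi> < 1" "\<bar>t\<bar> \<le> 1"
  shows "1 - of_real t * \<xi> \<noteq> 0"
proof -
  have "norm (of_real t * \<xi>) < 1"
    using assms by (simp add: norm_mult) (meson abs_ge_zero le_less_trans mult_left_le_one_le norm_ge_zero)
  then show ?thesis
    by auto
qed

lemma norm_radial_scaling:
  fixes z :: "'a::real_normed_vector"
  assumes "0 \<le> s" "s \<le> norm z" "z \<noteq> 0"
  shows "norm ((s / norm z) *\<^sub>R z) = s" and "norm (z - (s / norm z) *\<^sub>R z) = norm z - s"
proof -
  show "norm ((s / norm z) *\<^sub>R z) = s"
    using assms by simp
  have "z - (s / norm z) *\<^sub>R z = (1 - s / norm z) *\<^sub>R z"
    by (simp add: scaleR_left_diff_distrib)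
  moreover have "0 \<le> 1 - s / norm z"
    using assms by (simp add: divide_le_eq_1)
  ultimately have "norm (z - (s / norm z) *\<^sub>R z) = (1 - s / norm z) * norm z"
    by simp
  also have "\<dots> = norm z - s"
    using assms(3) by (simp add: field_simps)
  finally show "norm (z - (s / norm z) *\<^sub>R z) = norm z - s" .
qed

abbreviation cesaro_integrand :: "real \<Rightarrow> (complex \<Rightarrow> complex) \<Rightarrow> complex \<Rightarrow> complex" where
  "cesaro_integrand t f \<equiv> \<lambda>\<xi>. f \<xi> / (1 - of_real t * \<xi>)"

lemma holomorphic_cesaro_integrand:
  assumes "f holomorphic_on ball 0 1" "\<bar>t\<bar> \<le> 1"
  shows "cesaro_integrand t f holomorphic_on ball 0 1"
  using assms one_minus_of_real_mult_nonzero by (auto intro!: holomorphic_intros)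

lemma cesaro_eq_primitive_quotient:
  assumes G: "\<And>\<xi>. \<xi> \<in> ball 0 1 \<Longrightarrow>
      (G has_field_derivative cesaro_integrand t f \<xi>) (at \<xi> within ball 0 1)"
    and z: "z \<in> ball 0 1" "z \<noteq> 0"
  shows "cesaro t f z = (G z - G 0) / z"
proof -
  have "path_image (linepath 0 z) \<subseteq> ball 0 1"
    using z convex_ball[of "0::complex" 1] by (simp add: closed_segment_subset)
  then have "(cesaro_integrand t f has_contour_integral (G z - G 0)) (linepath 0 z)"
    using contour_integral_primitive[OF G] by fastforce
  then show ?thesis
    using z by (simp add: cesaro_def contour_integral_unique)
qed

lemma cesaro_0 [simp]: "cesaro t f 0 = f 0"
  by (simp add: cesaro_def)

lemma holomorphic_on_cesaro:
  assumes "f holomorphic_on ball 0 1" "\<bar>t\<bar> \<le> 1"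
  shows "cesaro t f holomorphic_on ball 0 1"
proof -
  obtain G where G: "\<And>\<xi>. \<xi> \<in> ball 0 1 \<Longrightarrow>
      (G has_field_derivative cesaro_integrand t f \<xi>) (at \<xi> within ball 0 1)"
    using holomorphic_convex_primitive'[OF convex_ball open_ball holomorphic_cesaro_integrand[OF assms]]
    by blast
  have "(G has_field_derivative cesaro_integrand t f 0) (at 0)"
    using G[of 0] at_within_open[of 0 "ball (0::complex) 1"] by simp
  then have "deriv G 0 = f 0"
    by (simp add: DERIV_imp_deriv)
  have "G holomorphic_on ball 0 1"
    using G by (metis holomorphic_on_def field_differentiable_def)
  then have "(\<lambda>z. if z = 0 then deriv G 0 else (G z - G 0) / (z - 0)) holomorphic_on ball 0 1"
    by (rule pole_lemma_open) simp
  then show ?thesis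
  proof (rule holomorphic_transform)
    fix z :: complex assume "z \<in> ball 0 1"
    then show "(if z = 0 then deriv G 0 else (G z - G 0) / (z - 0)) = cesaro t f z"
      using cesaro_eq_primitive_quotient[OF G] \<open>deriv G 0 = f 0\<close> by simp
  qed
qed

context
  fixes v :: "real \<Rightarrow> real" and t M :: real and f :: "complex \<Rightarrow> complex"
  assumes weight: "is_weight v" and t: "0 \<le> t" "t < 1"
    and bound: "\<And>z. z \<in> ball 0 1 \<Longrightarrow> norm (f z) * v (norm z) \<le> M"
begin

lemma weighted_bound_nonneg: "0 \<le> M"
proof -
  have "0 \<le> norm (f 0) * v 0"
    using weight_pos[OF weight, of 0] by simp
  then show ?thesis
    using bound[of 0] by simp
qed

lemma cesaro_integrand_bound:
  assumes "norm \<xi> \<le> R" "R < 1"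
  shows "norm (cesaro_integrand t f \<xi>) \<le> M / ((1 - t) * v R)"
proof -
  have f: "norm (f \<xi>) \<le> M / v R"
    using norm_le_of_weighted_bound[OF weight bound] assms by simp
  have "1 - t \<le> norm (1 - of_real t * \<xi>)"
    using norm_one_minus_of_real_mult_ge[of \<xi> t] assms t by simp
  then have "norm (f \<xi>) / norm (1 - of_real t * \<xi>) \<le> (M / v R) / (1 - t)"
    using f t order_trans[OF norm_ge_zero f] by (intro frac_le) auto
  then show ?thesis
    by (simp add: norm_divide mult.commute)
qed

lemma cesaro_primitive_estimate:
  assumes holo: "f holomorphic_on ball 0 1"
  obtains G where "\<And>z. z \<in> ball 0 1 \<Longrightarrow> z \<noteq> 0 \<Longrightarrow> cesaro t f z = (G z - G 0) / z"
    and "\<And>z w R. norm z \<le> R \<Longrightarrow> norm w \<le> R \<Longrightarrow> R < 1 \<Longrightarrow>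
           norm (G z - G w) \<le> M / ((1 - t) * v R) * norm (z - w)"
proof -
  obtain G where G: "\<And>\<xi>. \<xi> \<in> ball 0 1 \<Longrightarrow>
      (G has_field_derivative cesaro_integrand t f \<xi>) (at \<xi> within ball 0 1)"
    using holomorphic_convex_primitive'[OF convex_ball open_ball holomorphic_cesaro_integrand]
      holo t by (metis abs_of_nonneg less_imp_le)
  have lipschitz: "norm (G z - G w) \<le> M / ((1 - t) * v R) * norm (z - w)"
    if zw: "norm z \<le> R" "norm w \<le> R" "R < 1" for z w R
  proof (rule field_differentiable_bound[OF convex_cball])
    fix \<xi> :: complex assume \<xi>: "\<xi> \<in> cball 0 R"
    have "cball 0 R \<subseteq> ball (0::complex) 1"
      using zw by auto
    then show "(G has_field_derivative cesaro_integrand t f \<xi>) (at \<xi> within cball 0 R)"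
      using G \<xi> by (blast intro: DERIV_subset)
    show "norm (cesaro_integrand t f \<xi>) \<le> M / ((1 - t) * v R)"
      using cesaro_integrand_bound \<xi> zw by simp
  qed (use zw in auto)
  show thesis
    using that cesaro_eq_primitive_quotient[OF G] lipschitz by blast
qed

lemma cesaro_weighted_bound:
  assumes holo: "f holomorphic_on ball 0 1" and z: "z \<in> ball 0 1"
  shows "norm (cesaro t f z) * v (norm z) \<le> M / (1 - t)"
proof (cases "z = 0")
  case True
  have "M \<le> M / (1 - t)"
    using t weighted_bound_nonneg by (simp add: le_divide_eq mult_left_le)
  then show ?thesis
    using True bound[of 0] by simp
next
  case False
  obtain G where quot: "\<And>z. z \<in> ball 0 1 \<Longrightarrow> z \<noteq> 0 \<Longrightarrow> cesaro t f z = (G z - G 0) / z"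
    and lipschitz: "\<And>z w R. norm z \<le> R \<Longrightarrow> norm w \<le> R \<Longrightarrow> R < 1 \<Longrightarrow>
           norm (G z - G w) \<le> M / ((1 - t) * v R) * norm (z - w)"
    using cesaro_primitive_estimate[OF holo] by blast
  have vz: "0 < v (norm z)"
    using weight_pos[OF weight] z by simp
  have "norm (cesaro t f z) = norm (G z - G 0) / norm z"
    using quot[OF z False] by (simp add: norm_divide)
  also have "\<dots> \<le> M / ((1 - t) * v (norm z))"
    using lipschitz[of z "norm z" 0] z False by (simp add: pos_divide_le_eq)
  finally show ?thesis
    using vz t by (simp add: pos_le_divide_eq mult_ac)
qed

lemma cesaro_radial_estimate:
  assumes holo: "f holomorphic_on ball 0 1"
    and \<delta>: "0 < \<delta>" "\<delta> \<le> 1" and z: "1 - \<delta> < norm z" "norm z < 1"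
  shows "norm (z * cesaro t f z) * v (norm z) \<le> M / (1 - t) * (v (norm z) / v (1 - \<delta>) + \<delta>)"
proof -
  obtain G where quot: "\<And>z. z \<in> ball 0 1 \<Longrightarrow> z \<noteq> 0 \<Longrightarrow> cesaro t f z = (G z - G 0) / z"
    and lipschitz: "\<And>z w R. norm z \<le> R \<Longrightarrow> norm w \<le> R \<Longrightarrow> R < 1 \<Longrightarrow>
           norm (G z - G w) \<le> M / ((1 - t) * v R) * norm (z - w)"
    using cesaro_primitive_estimate[OF holo] by blast
  define K where "K = M / (1 - t)"
  define w where "w = ((1 - \<delta>) / norm z) *\<^sub>R z"
  have "z \<noteq> 0"
    using z \<delta> by auto
  then have w: "norm w = 1 - \<delta>" and zw: "norm (z - w) \<le> \<delta>"
    using norm_radial_scaling[of "1 - \<delta>" z] z \<delta> by (simp_all add: w_def)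
  have vz: "0 < v (norm z)" and v\<delta>: "0 < v (1 - \<delta>)"
    using weight_pos[OF weight] z \<delta> by auto
  have "norm (G w - G 0) \<le> K / v (1 - \<delta>) * (1 - \<delta>)"
    using lipschitz[of w "1 - \<delta>" 0] w \<delta> z by (simp add: K_def mult.commute)
  also have "\<dots> \<le> K / v (1 - \<delta>)"
    using weighted_bound_nonneg t v\<delta> \<delta> by (intro mult_left_le) (auto simp: K_def)
  finally have inner: "norm (G w - G 0) \<le> K / v (1 - \<delta>)" .
  have "norm (G z - G w) \<le> K / v (norm z) * norm (z - w)"
    using lipschitz[of z "norm z" w] w z by (simp add: K_def mult.commute)
  also have "\<dots> \<le> K / v (norm z) * \<delta>"
    using weighted_bound_nonneg t vz zw by (intro mult_left_mono) (auto simp: K_def)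
  finally have outer: "norm (G z - G w) \<le> K / v (norm z) * \<delta>" .
  have "z * cesaro t f z = G z - G 0"
    using quot[of z] z \<open>z \<noteq> 0\<close> by simp
  then have "norm (z * cesaro t f z) * v (norm z) \<le> (K / v (1 - \<delta>) + K / v (norm z) * \<delta>) * v (norm z)"
    using norm_triangle_le[of "G z - G w" "G w - G 0"] inner outer vz
    by (intro mult_right_mono) auto
  also have "\<dots> = K * (v (norm z) / v (1 - \<delta>) + \<delta>)"
    using vz by (simp add: field_simps)
  finally show ?thesis
    by (simp add: K_def)
qed

lemma cesaro_weighted_bound_near_boundary:
  assumes holo: "f holomorphic_on ball 0 1"
    and \<delta>: "0 < \<delta>" "\<delta> \<le> 1/2" and z: "1 - \<delta> < norm z" "norm z < 1"
  shows "norm (cesaro t f z) * v (norm z) \<le> 2 * (M / (1 - t)) * (v (norm z) / v (1 - \<delta>) + \<delta>)"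
proof -
  have "1 \<le> 2 * norm z"
    using z \<delta> by simp
  then have "norm (cesaro t f z) \<le> 2 * norm (z * cesaro t f z)"
    using mult_left_mono[of 1 "2 * norm z" "norm (cesaro t f z)"] by (simp add: norm_mult mult_ac)
  then have "norm (cesaro t f z) * v (norm z) \<le> 2 * (norm (z * cesaro t f z) * v (norm z))"
    using weight_pos[OF weight, of "norm z"] z by (simp add: mult_right_mono)
  also have "\<dots> \<le> 2 * (M / (1 - t) * (v (norm z) / v (1 - \<delta>) + \<delta>))"
    using cesaro_radial_estimate[OF holo \<delta>(1) _ z] \<delta>(2) by simp
  finally show ?thesis
    by simp
qed

end

definition vanishes_uniformly_at_boundary ::
    "(real \<Rightarrow> real) \<Rightarrow> (complex \<Rightarrow> complex) set \<Rightarrow> bool" where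
  "vanishes_uniformly_at_boundary v \<F> \<longleftrightarrow>
     (\<forall>\<epsilon>>0. \<exists>\<rho><1. \<forall>f\<in>\<F>. \<forall>z. \<rho> < norm z \<longrightarrow> norm z < 1 \<longrightarrow> norm (f z) * v (norm z) \<le> \<epsilon>)"

lemma vanishes_uniformly_at_boundaryD:
  assumes "vanishes_uniformly_at_boundary v \<F>" "0 < \<epsilon>"
  obtains \<rho> where "\<rho> < 1"
    "\<And>f z. f \<in> \<F> \<Longrightarrow> \<rho> < norm z \<Longrightarrow> norm z < 1 \<Longrightarrow> norm (f z) * v (norm z) \<le> \<epsilon>"
  using assms unfolding vanishes_uniformly_at_boundary_def by blast

lemma vanishes_uniformly_at_boundary_subset:
  "vanishes_uniformly_at_boundary v \<G> \<Longrightarrow> \<F> \<subseteq> \<G> \<Longrightarrow> vanishes_uniformly_at_boundary v \<F>"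
  unfolding vanishes_uniformly_at_boundary_def by (meson subsetD)

lemma vanishes_uniformly_at_boundary_diff:
  assumes weight: "is_weight v"
    and \<F>: "vanishes_uniformly_at_boundary v \<F>" and \<G>: "vanishes_uniformly_at_boundary v \<G>"
  shows "vanishes_uniformly_at_boundary v {\<lambda>z. f z - g z | f g. f \<in> \<F> \<and> g \<in> \<G>}"
  unfolding vanishes_uniformly_at_boundary_def
proof (intro allI impI)
  fix \<epsilon> :: real assume "0 < \<epsilon>"
  obtain \<rho>1 where "\<rho>1 < 1"
    and tail_\<F>: "\<And>f z. f \<in> \<F> \<Longrightarrow> \<rho>1 < norm z \<Longrightarrow> norm z < 1 \<Longrightarrow> norm (f z) * v (norm z) \<le> \<epsilon>/2"
    by (rule vanishes_uniformly_at_boundaryD[OF \<F> half_gt_zero[OF \<open>0 < \<epsilon>\<close>]]) blast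
  obtain \<rho>2 where "\<rho>2 < 1"
    and tail_\<G>: "\<And>g z. g \<in> \<G> \<Longrightarrow> \<rho>2 < norm z \<Longrightarrow> norm z < 1 \<Longrightarrow> norm (g z) * v (norm z) \<le> \<epsilon>/2"
    by (rule vanishes_uniformly_at_boundaryD[OF \<G> half_gt_zero[OF \<open>0 < \<epsilon>\<close>]]) blast
  have "norm (f z - g z) * v (norm z) \<le> \<epsilon>"
    if "f \<in> \<F>" "g \<in> \<G>" "max \<rho>1 \<rho>2 < norm z" "norm z < 1" for f g z
  proof -
    have "norm (f z - g z) * v (norm z) \<le> norm (f z) * v (norm z) + norm (g z) * v (norm z)"
      using norm_triangle_ineq4[of "f z" "g z"] weight_pos[OF weight, of "norm z"] that(4)
      by (simp add: mult_right_mono flip: distrib_right)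
    then show ?thesis
      using tail_\<F>[of f z] tail_\<G>[of g z] that by simp
  qed
  then show "\<exists>\<rho><1. \<forall>h\<in>{\<lambda>z. f z - g z | f g. f \<in> \<F> \<and> g \<in> \<G>}. \<forall>z. \<rho> < norm z \<longrightarrow> norm z < 1 \<longrightarrow>
      norm (h z) * v (norm z) \<le> \<epsilon>"
    using \<open>\<rho>1 < 1\<close> \<open>\<rho>2 < 1\<close> by (intro exI[of _ "max \<rho>1 \<rho>2"]) auto
qed

lemma vanishes_uniformly_at_boundary_limit:
  assumes F: "vanishes_uniformly_at_boundary v (range F)"
    and lim: "\<And>z. z \<in> ball 0 1 \<Longrightarrow> (\<lambda>n. F n z) \<longlonglongrightarrow> g z"
  shows "vanishes_uniformly_at_boundary v {g}"
  unfolding vanishes_uniformly_at_boundary_def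
proof (intro allI impI)
  fix \<epsilon> :: real assume "0 < \<epsilon>"
  then obtain \<rho> where "\<rho> < 1"
    and \<rho>: "\<And>n z. \<rho> < norm z \<Longrightarrow> norm z < 1 \<Longrightarrow> norm (F n z) * v (norm z) \<le> \<epsilon>"
    by (rule vanishes_uniformly_at_boundaryD[OF F]) blast
  have "norm (g z) * v (norm z) \<le> \<epsilon>" if z: "\<rho> < norm z" "norm z < 1" for z
  proof (rule LIMSEQ_le_const2)
    show "(\<lambda>n. norm (F n z) * v (norm z)) \<longlonglongrightarrow> norm (g z) * v (norm z)"
      using lim[of z] z by (auto intro!: tendsto_intros)
  qed (use \<rho> z in auto)
  then show "\<exists>\<rho><1. \<forall>f\<in>{g}. \<forall>z. \<rho> < norm z \<longrightarrow> norm z < 1 \<longrightarrow> norm (f z) * v (norm z) \<le> \<epsilon>"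
    using \<open>\<rho> < 1\<close> by blast
qed

lemma H0_iff: "f \<in> H0 v \<longleftrightarrow> f holomorphic_on ball 0 1 \<and> vanishes_uniformly_at_boundary v {f}"
proof -
  have "(\<forall>\<epsilon>>0. \<exists>r<1. \<forall>z. r < norm z \<and> norm z < 1 \<longrightarrow> norm (f z) * v (norm z) < \<epsilon>) \<longleftrightarrow>
        (\<forall>\<epsilon>>0. \<exists>r<1. \<forall>z. r < norm z \<longrightarrow> norm z < 1 \<longrightarrow> norm (f z) * v (norm z) \<le> \<epsilon>)"
    by (meson field_lbound_gt_zero half_gt_zero le_less_trans less_imp_le)
  then show ?thesis
    by (simp add: H0_def vanishes_uniformly_at_boundary_def)
qed

lemma Hinf_imp_holomorphic: "f \<in> Hinf v \<Longrightarrow> f holomorphic_on ball 0 1"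
  by (simp add: Hinf_def)

lemma weighted_le_of_wnorm_le:
  assumes "f \<in> Hinf v" "wnorm v f \<le> M" "z \<in> ball 0 1"
  shows "norm (f z) * v (norm z) \<le> M"
proof -
  have "norm (f z) * v (norm z) \<le> wnorm v f"
    using assms(1,3) unfolding Hinf_def wnorm_def by (auto intro: cSUP_upper)
  then show ?thesis
    using assms(2) by linarith
qed

lemma abs_wnorm_le:
  assumes "is_weight v" "\<And>z. z \<in> ball 0 1 \<Longrightarrow> norm (g z) * v (norm z) \<le> c"
  shows "\<bar>wnorm v g\<bar> \<le> c"
proof -
  have "bdd_above ((\<lambda>z. norm (g z) * v (norm z)) ` ball 0 1)"
    using assms(2) by (intro bdd_aboveI2[where M = c])
  then have "norm (g 0) * v (norm (0::complex)) \<le> wnorm v g"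
    unfolding wnorm_def by (rule cSUP_upper[rotated]) simp
  then have "0 \<le> wnorm v g"
    using weight_pos[OF assms(1), of 0] by (simp add: order_trans[rotated])
  moreover have "wnorm v g \<le> c"
    unfolding wnorm_def using assms(2) by (intro cSUP_least) auto
  ultimately show ?thesis
    by simp
qed

lemma H0_subset_Hinf:
  assumes weight: "is_weight v"
  shows "H0 v \<subseteq> Hinf v"
proof
  fix f assume "f \<in> H0 v"
  then have holo: "f holomorphic_on ball 0 1"
    and tails: "vanishes_uniformly_at_boundary v {f}"
    by (simp_all add: H0_iff)
  obtain \<rho> where "\<rho> < 1"
    and tail: "\<And>z. \<rho> < norm z \<Longrightarrow> norm z < 1 \<Longrightarrow> norm (f z) * v (norm z) \<le> 1"
    by (rule vanishes_uniformly_at_boundaryD[OF tails zero_less_one]) blast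
  have "compact (f ` cball 0 \<rho>)"
    using holo \<open>\<rho> < 1\<close>
    by (intro compact_continuous_image holomorphic_on_imp_continuous_on)
      (auto elim: holomorphic_on_subset)
  then obtain B where B: "\<And>z. norm z \<le> \<rho> \<Longrightarrow> norm (f z) \<le> B"
    by (meson compact_imp_bounded bounded_pos image_eqI mem_cball_0)
  have "norm (f z) * v (norm z) \<le> max 1 (B * v 0)" if z: "z \<in> ball 0 1" for z
  proof (cases "norm z \<le> \<rho>")
    case True
    have "0 < v (norm z)" "v (norm z) \<le> v 0"
      using weight_pos[OF weight] weight_antimono[OF weight] z by auto
    then have "norm (f z) * v (norm z) \<le> B * v 0"
      using B[OF True] by (intro mult_mono) (auto intro: order_trans[OF norm_ge_zero])
    then show ?thesis
      by simp
  next
    case False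
    then have "norm (f z) * v (norm z) \<le> 1"
      using tail[of z] z by simp
    then show ?thesis
      by simp
  qed
  then have "bdd_above ((\<lambda>z. norm (f z) * v (norm z)) ` ball 0 1)"
    by (intro bdd_aboveI2[where M = "max 1 (B * v 0)"])
  then show "f \<in> Hinf v"
    using holo by (simp add: Hinf_def)
qed

lemma exists_small_boundary_layer:
  fixes v :: "real \<Rightarrow> real"
  assumes lim: "(v \<longlongrightarrow> 0) (at_left 1)" and "0 < \<epsilon>"
  obtains \<delta> \<rho> where "0 < \<delta>" "\<delta> \<le> 1/2" "\<rho> < 1"
    and "\<And>s. \<rho> < s \<Longrightarrow> s < 1 \<Longrightarrow> 1 - \<delta> < s \<and> K * (v s / v (1 - \<delta>) + \<delta>) < \<epsilon>"
proof -
  have "((\<lambda>\<delta>. K * \<delta>) \<longlongrightarrow> K * 0) (at_right 0)"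
    by (intro tendsto_mult_left tendsto_ident_at)
  then have "\<forall>\<^sub>F \<delta> in at_right 0. K * \<delta> < \<epsilon>"
    using \<open>0 < \<epsilon>\<close> by (simp add: order_tendstoD(2))
  then obtain b where "0 < b" and b: "\<And>\<delta>. 0 < \<delta> \<Longrightarrow> \<delta> < b \<Longrightarrow> K * \<delta> < \<epsilon>"
    unfolding eventually_at_right_field by blast
  define \<delta> where "\<delta> = min (1/2) (b/2)"
  have \<delta>: "0 < \<delta>" "\<delta> \<le> 1/2" "K * \<delta> < \<epsilon>"
    using \<open>0 < b\<close> b[of \<delta>] by (auto simp: \<delta>_def)
  have "\<forall>\<^sub>F s in at_left 1. 1 - \<delta> < s"
    unfolding eventually_at_left_field using \<delta>(1) by (intro exI[of _ "1 - \<delta>"]) auto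
  moreover have "((\<lambda>s. v s / v (1 - \<delta>)) \<longlongrightarrow> 0) (at_left 1)"
    using tendsto_divide_zero[OF lim] .
  then have "((\<lambda>s. K * (v s / v (1 - \<delta>) + \<delta>)) \<longlongrightarrow> K * (0 + \<delta>)) (at_left 1)"
    by (intro tendsto_mult_left tendsto_add tendsto_const)
  then have "\<forall>\<^sub>F s in at_left 1. K * (v s / v (1 - \<delta>) + \<delta>) < \<epsilon>"
    using \<delta>(3) by (simp add: order_tendstoD(2))
  ultimately have "\<forall>\<^sub>F s in at_left 1. 1 - \<delta> < s \<and> K * (v s / v (1 - \<delta>) + \<delta>) < \<epsilon>"
    by (rule eventually_conj)
  then obtain \<rho> where "\<rho> < 1"
    and "\<And>s. \<rho> < s \<Longrightarrow> s < 1 \<Longrightarrow> 1 - \<delta> < s \<and> K * (v s / v (1 - \<delta>) + \<delta>) < \<epsilon>"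
    unfolding eventually_at_left_field by blast
  then show thesis
    using that \<delta>(1,2) by blast
qed

lemma cesaro_Hinf_weighted_bound:
  assumes "is_weight v" "0 \<le> t" "t < 1" and f: "f \<in> Hinf v" "wnorm v f \<le> M" and "z \<in> ball 0 1"
  shows "norm (cesaro t f z) * v (norm z) \<le> M / (1 - t)"
  by (rule cesaro_weighted_bound[OF assms(1-3) _ Hinf_imp_holomorphic[OF f(1)] assms(6)])
    (rule weighted_le_of_wnorm_le[OF f])

lemma cesaro_image_vanishes_uniformly_at_boundary:
  assumes weight: "is_weight v" and lim: "(v \<longlongrightarrow> 0) (at_left 1)" and t: "0 \<le> t" "t < 1"
  shows "vanishes_uniformly_at_boundary v (cesaro t ` {f \<in> Hinf v. wnorm v f \<le> M})"
  unfolding vanishes_uniformly_at_boundary_def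
proof (intro allI impI)
  fix \<epsilon> :: real assume "0 < \<epsilon>"
  then obtain \<delta> \<rho> where \<delta>: "0 < \<delta>" "\<delta> \<le> 1/2" and "\<rho> < 1" and \<rho>: "\<And>s. \<rho> < s \<Longrightarrow> s < 1 \<Longrightarrow>
      1 - \<delta> < s \<and> 2 * (M / (1 - t)) * (v s / v (1 - \<delta>) + \<delta>) < \<epsilon>"
    by (rule exists_small_boundary_layer[OF lim]) blast
  have "norm (cesaro t f z) * v (norm z) \<le> \<epsilon>"
    if f: "f \<in> Hinf v" "wnorm v f \<le> M" and z: "\<rho> < norm z" "norm z < 1" for f z
  proof -
    have "1 - \<delta> < norm z" and small: "2 * (M / (1 - t)) * (v (norm z) / v (1 - \<delta>) + \<delta>) < \<epsilon>"
      using \<rho>[OF z] by auto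
    then have "norm (cesaro t f z) * v (norm z) \<le> 2 * (M / (1 - t)) * (v (norm z) / v (1 - \<delta>) + \<delta>)"
      using cesaro_weighted_bound_near_boundary[OF weight t weighted_le_of_wnorm_le[OF f]
          Hinf_imp_holomorphic[OF f(1)] \<delta>] z(2) by blast
    then show ?thesis
      using small by linarith
  qed
  then show "\<exists>\<rho><1. \<forall>h\<in>cesaro t ` {f \<in> Hinf v. wnorm v f \<le> M}. \<forall>z. \<rho> < norm z \<longrightarrow>
      norm z < 1 \<longrightarrow> norm (h z) * v (norm z) \<le> \<epsilon>"
    using \<open>\<rho> < 1\<close> by blast
qed

lemma cesaro_Hinf_into_H0:
  assumes "is_weight v" "(v \<longlongrightarrow> 0) (at_left 1)" "0 \<le> t" "t < 1" and f: "f \<in> Hinf v"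
  shows "cesaro t f \<in> H0 v"
proof -
  have "vanishes_uniformly_at_boundary v {cesaro t f}"
    using cesaro_image_vanishes_uniformly_at_boundary[OF assms(1-4), of "wnorm v f"]
    by (rule vanishes_uniformly_at_boundary_subset) (use f in auto)
  moreover have "cesaro t f holomorphic_on ball 0 1"
    using Hinf_imp_holomorphic[OF f] assms(3,4) by (intro holomorphic_on_cesaro) auto
  ultimately show ?thesis
    by (simp add: H0_iff)
qed

lemma wnorm_diff_tendsto_zero:
  assumes weight: "is_weight v"
    and tails: "vanishes_uniformly_at_boundary v (range (\<lambda>n z. F n z - g z))"
    and unif: "\<And>R. R < 1 \<Longrightarrow> uniform_limit (cball 0 R) F g sequentially"
  shows "(\<lambda>n. wnorm v (\<lambda>z. F n z - g z)) \<longlonglongrightarrow> 0"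
proof (rule LIMSEQ_I)
  fix \<epsilon> :: real assume "0 < \<epsilon>"
  obtain \<rho> where "\<rho> < 1"
    and tail: "\<And>n z. \<rho> < norm z \<Longrightarrow> norm z < 1 \<Longrightarrow> norm (F n z - g z) * v (norm z) \<le> \<epsilon>/2"
    by (rule vanishes_uniformly_at_boundaryD[OF tails half_gt_zero[OF \<open>0 < \<epsilon>\<close>]]) blast
  have v0: "0 < v 0"
    using weight_pos[OF weight] by simp
  have "\<forall>\<^sub>F n in sequentially. \<forall>z\<in>cball 0 \<rho>. dist (F n z) (g z) < \<epsilon> / (2 * v 0)"
    using uniform_limitD[OF unif[OF \<open>\<rho> < 1\<close>]] \<open>0 < \<epsilon>\<close> v0 by simp
  then obtain N where N: "\<And>n z. N \<le> n \<Longrightarrow> norm z \<le> \<rho> \<Longrightarrow> norm (F n z - g z) < \<epsilon> / (2 * v 0)"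
    unfolding eventually_sequentially by (metis dist_norm mem_cball_0)
  have "\<bar>wnorm v (\<lambda>z. F n z - g z)\<bar> \<le> \<epsilon>/2" if "N \<le> n" for n
  proof (rule abs_wnorm_le[OF weight])
    fix z :: complex assume z: "z \<in> ball 0 1"
    show "norm (F n z - g z) * v (norm z) \<le> \<epsilon>/2"
    proof (cases "norm z \<le> \<rho>")
      case True
      have "0 < v (norm z)" "v (norm z) \<le> v 0"
        using weight_pos[OF weight] weight_antimono[OF weight] z by auto
      then have "norm (F n z - g z) * v (norm z) \<le> \<epsilon> / (2 * v 0) * v 0"
        using N[OF \<open>N \<le> n\<close> True] \<open>0 < \<epsilon>\<close> by (intro mult_mono) auto
      then show ?thesis
        using v0 by simp
    next
      case False
      then show ?thesis
        using tail z by simp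
    qed
  qed
  then show "\<exists>N. \<forall>n\<ge>N. norm (wnorm v (\<lambda>z. F n z - g z) - 0) < \<epsilon>"
    using \<open>0 < \<epsilon>\<close> by force
qed

lemma compact_subset_ball_imp_subset_cball:
  fixes a :: "'a::metric_space"
  assumes "compact K" "K \<subseteq> ball a r"
  obtains r' where "r' < r" "K \<subseteq> cball a r'"
proof (cases "K = {}")
  case True
  then show ?thesis
    using that[of "r - 1"] by simp
next
  case False
  have "compact (dist a ` K)"
    using assms(1) by (intro compact_continuous_image continuous_intros)
  then obtain x where "x \<in> K" and x: "\<And>y. y \<in> K \<Longrightarrow> dist a y \<le> dist a x"
    using compact_attains_sup[of "dist a ` K"] False by auto
  have "dist a x < r"
    using \<open>x \<in> K\<close> assms(2) by auto
  moreover have "K \<subseteq> cball a (dist a x)"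
    using x by (auto simp: subset_eq)
  ultimately show ?thesis
    using that by blast
qed

lemma locally_bounded_if_weighted_bounded:
  assumes weight: "is_weight v"
    and bound: "\<forall>h\<in>\<H>. \<forall>z\<in>ball 0 1. norm (h z) * v (norm z) \<le> M"
    and K: "compact K" "K \<subseteq> ball 0 1"
  shows "\<exists>B. \<forall>h\<in>\<H>. \<forall>z\<in>K. norm (h z) \<le> B"
proof -
  obtain R where "R < 1" "K \<subseteq> cball 0 R"
    using compact_subset_ball_imp_subset_cball[OF K] by blast
  have "norm (h z) \<le> M / v R" if "h \<in> \<H>" "z \<in> K" for h z
  proof (rule norm_le_of_weighted_bound[OF weight])
    show "norm (h z) * v (norm z) \<le> M"
      using bound that K by blast
    show "norm z \<le> R"
      using that \<open>K \<subseteq> cball 0 R\<close> by auto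
  qed (rule \<open>R < 1\<close>)
  then show ?thesis
    by blast
qed

lemma weighted_Montel:
  fixes H :: "nat \<Rightarrow> complex \<Rightarrow> complex"
  assumes weight: "is_weight v"
    and holo: "\<forall>h\<in>\<H>. h holomorphic_on ball 0 1"
    and bound: "\<forall>h\<in>\<H>. \<forall>z\<in>ball 0 1. norm (h z) * v (norm z) \<le> M"
    and tails: "vanishes_uniformly_at_boundary v \<H>"
    and H: "range H \<subseteq> \<H>"
  obtains r g where "strict_mono r" "g \<in> H0 v" "(\<lambda>n. wnorm v (\<lambda>z. H (r n) z - g z)) \<longlonglongrightarrow> 0"
proof -
  obtain g and r :: "nat \<Rightarrow> nat" where "g holomorphic_on ball 0 1" "strict_mono r"
    and pointwise: "\<And>z. z \<in> ball 0 1 \<Longrightarrow> (\<lambda>n. H (r n) z) \<longlonglongrightarrow> g z"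
    and unif: "\<And>K. compact K \<Longrightarrow> K \<subseteq> ball 0 1 \<Longrightarrow> uniform_limit K (H \<circ> r) g sequentially"
    using Montel[OF open_ball _ locally_bounded_if_weighted_bounded[OF weight bound] H] holo
    by blast
  have tails_r: "vanishes_uniformly_at_boundary v (range (\<lambda>n. H (r n)))"
    using tails by (rule vanishes_uniformly_at_boundary_subset) (use H in auto)
  have tails_g: "vanishes_uniformly_at_boundary v {g}"
    using tails_r pointwise by (rule vanishes_uniformly_at_boundary_limit)
  have "range (\<lambda>n z. H (r n) z - g z) \<subseteq> {\<lambda>z. f z - g' z | f g'. f \<in> range (\<lambda>n. H (r n)) \<and> g' \<in> {g}}"
    by blast
  with vanishes_uniformly_at_boundary_diff[OF weight tails_r tails_g]
  have "vanishes_uniformly_at_boundary v (range (\<lambda>n z. H (r n) z - g z))"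
    by (rule vanishes_uniformly_at_boundary_subset)
  then have "(\<lambda>n. wnorm v (\<lambda>z. H (r n) z - g z)) \<longlonglongrightarrow> 0"
  proof (rule wnorm_diff_tendsto_zero[OF weight])
    fix R :: real assume "R < 1"
    then have "cball 0 R \<subseteq> ball (0::complex) 1"
      by auto
    then show "uniform_limit (cball 0 R) (\<lambda>n. H (r n)) g sequentially"
      using unif[of "cball 0 R"] by (simp add: o_def)
  qed
  moreover have "g \<in> H0 v"
    using tails_g \<open>g holomorphic_on ball 0 1\<close> by (simp add: H0_iff)
  ultimately show thesis
    using that \<open>strict_mono r\<close> by blast
qed

lemma compact_op_on_cesaro:
  assumes weight: "is_weight v" and lim: "(v \<longlongrightarrow> 0) (at_left 1)" and t: "0 \<le> t" "t < 1"
    and X: "H0 v \<subseteq> X" "X \<subseteq> Hinf v"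
  shows "compact_op_on v X (cesaro t)"
  unfolding compact_op_on_def
proof (intro conjI ballI allI impI)
  fix f assume "f \<in> X"
  then show "cesaro t f \<in> X"
    using cesaro_Hinf_into_H0[OF weight lim t] X by blast
next
  fix F :: "nat \<Rightarrow> complex \<Rightarrow> complex" assume F: "\<forall>n. F n \<in> X \<and> wnorm v (F n) \<le> 1"
  define \<H> where "\<H> = cesaro t ` {f \<in> Hinf v. wnorm v f \<le> 1}"
  have "\<forall>h\<in>\<H>. h holomorphic_on ball 0 1"
    using t unfolding \<H>_def by (auto intro!: holomorphic_on_cesaro dest: Hinf_imp_holomorphic)
  moreover have "\<forall>h\<in>\<H>. \<forall>z\<in>ball 0 1. norm (h z) * v (norm z) \<le> 1 / (1 - t)"
    unfolding \<H>_def using cesaro_Hinf_weighted_bound[OF weight t] by blast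
  moreover have "vanishes_uniformly_at_boundary v \<H>"
    unfolding \<H>_def by (rule cesaro_image_vanishes_uniformly_at_boundary[OF weight lim t])
  moreover have "range (\<lambda>n. cesaro t (F n)) \<subseteq> \<H>"
    using F X by (auto simp: \<H>_def)
  ultimately obtain r g where "strict_mono r" "g \<in> H0 v"
    and "(\<lambda>n. wnorm v (\<lambda>z. cesaro t (F (r n)) z - g z)) \<longlonglongrightarrow> 0"
    by (rule weighted_Montel[OF weight])
  then show "\<exists>r g. strict_mono r \<and> g \<in> X \<and>
      (\<lambda>n. wnorm v (\<lambda>z. cesaro t (F (r n)) z - g z)) \<longlonglongrightarrow> 0"
    using X by blast
qed

theorem proposition2p7:
  fixes v :: "real \<Rightarrow> real" and t :: real
  assumes "is_weight v"
    and "(v \<longlongrightarrow> 0) (at_left 1)"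
    and "0 \<le> t" and "t < 1"
  shows "compact_op_on v (Hinf v) (cesaro t) \<and> compact_op_on v (H0 v) (cesaro t)"
  using compact_op_on_cesaro[OF assms order_refl H0_subset_Hinf[OF assms(1)]]
    compact_op_on_cesaro[OF assms H0_subset_Hinf[OF assms(1)] order_refl] by blast

end
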